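(* Let $U$ be a real separable Hilbert space (complexified if necessary), $\Lambda$ a positive self-adjoint operator on $U$ with orthogonal basis of eigenvectors $(e_n)$ and eigenvalues $\mu_n\uparrow+\infty$, $\rho>0$, $\alpha\in[1/2,1)$, $\gamma\in[0,1/2)$, with $\rho^2\ne4\mu_n^{1-2\alpha}$ for all $n$. On $H=U\times U$ let $A=\begin{pmatrix}0&\Lambda^{1/2}\\-\Lambda^{1/2}&-\rho\Lambda^\alpha\end{pmatrix}$, $G=\widetilde G\Lambda^{-\gamma}$ with $\widetilde Gu=(0,u)$. For $n\in\mathbb N$ let $\lambda_n^\pm=\frac{-\rho\mu_n^\alpha\pm\sqrt{\rho^2\mu_n^{2\alpha}-4\mu_n}}2$, $\Phi_n^\pm=(\mu_n^{1/2}e_n,\lambda_n^\pm e_n)$ (eigenvectors of $A$), $H_n=\mathrm{span}\{\Phi_k^+,\Phi_k^-:k\le n\}$, $P_n$ the orthogonal projection onto $H_n$, $A_n$ the restriction of $A$ to $H_n$ and $G_n=P_nG$. Then for every $n$ the control system $Y'(\tau)=A_nY(\tau)+G_nu(\tau)$, $\tau\in(0,t]$, $Y(0)=h\in H_n$, is null-controllable, and for every $t>0$ there exists $\bar c>0$, depending on $\alpha,\gamma,t$ but not on $n$, such that $\mathcal E_{C,n}(t,h)\le \bar c\,\|h\|_H\,t^{-1/2-(\gamma+\alpha-1/2)/(1-\alpha)}$ for all $h\in H_n$.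
   Context: For $u\in L^2(0,t;U)$ the (mild) solution is $Y(\tau)=e^{\tau A_n}h+\int_0^\tau e^{(\tau-s)A_n}G_nu(s)ds$. Null-controllable means: for every $t>0$ and $h\in H_n$ there is $u\in L^2(0,t;U)$ with $Y(t)=0$. $\mathcal E_{C,n}(t,h):=\inf\{\|u\|_{L^2(0,t;U)}: Y(t)=0\}$ is the minimal energy to steer $h$ to $0$ at time $t$. *)

theory Defs
  imports "HOL-Analysis.Analysis"
begin

text \<open>U is realised (after complexification) via its orthonormal eigenbasis (e_j):
  an element of U is its coordinate sequence nat => complex, Lambda acts diagonally by mu j.
  An element of H = U x U is the sequence j => (coordinate of first component on e_j,
  coordinate of second component on e_j).\<close>

type_synonym hvec = "nat \<Rightarrow> complex \<times> complex"

definition csc :: "complex \<Rightarrow> complex \<times> complex \<Rightarrow> complex \<times> complex" where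
  "csc c p = (c * fst p, c * snd p)"

definition lam_p :: "(nat \<Rightarrow> real) \<Rightarrow> real \<Rightarrow> real \<Rightarrow> nat \<Rightarrow> complex" where
  "lam_p \<mu> \<rho> \<alpha> k =
     (- complex_of_real (\<rho> * \<mu> k powr \<alpha>)
      + csqrt (complex_of_real (\<rho>\<^sup>2 * \<mu> k powr (2 * \<alpha>) - 4 * \<mu> k))) / 2"

definition lam_m :: "(nat \<Rightarrow> real) \<Rightarrow> real \<Rightarrow> real \<Rightarrow> nat \<Rightarrow> complex" where
  "lam_m \<mu> \<rho> \<alpha> k =
     (- complex_of_real (\<rho> * \<mu> k powr \<alpha>)
      - csqrt (complex_of_real (\<rho>\<^sup>2 * \<mu> k powr (2 * \<alpha>) - 4 * \<mu> k))) / 2"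

definition Phi_p :: "(nat \<Rightarrow> real) \<Rightarrow> real \<Rightarrow> real \<Rightarrow> nat \<Rightarrow> hvec" where
  "Phi_p \<mu> \<rho> \<alpha> k = (\<lambda>j. if j = k then (complex_of_real (sqrt (\<mu> k)), lam_p \<mu> \<rho> \<alpha> k) else (0, 0))"

definition Phi_m :: "(nat \<Rightarrow> real) \<Rightarrow> real \<Rightarrow> real \<Rightarrow> nat \<Rightarrow> hvec" where
  "Phi_m \<mu> \<rho> \<alpha> k = (\<lambda>j. if j = k then (complex_of_real (sqrt (\<mu> k)), lam_m \<mu> \<rho> \<alpha> k) else (0, 0))"

definition Hn :: "(nat \<Rightarrow> real) \<Rightarrow> real \<Rightarrow> real \<Rightarrow> nat \<Rightarrow> hvec set" where
  "Hn \<mu> \<rho> \<alpha> n = {h. \<exists>a b :: nat \<Rightarrow> complex.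
      h = (\<lambda>j. \<Sum>k\<le>n. csc (a k) (Phi_p \<mu> \<rho> \<alpha> k j) + csc (b k) (Phi_m \<mu> \<rho> \<alpha> k j))}"

definition hinner :: "hvec \<Rightarrow> hvec \<Rightarrow> complex" where
  "hinner v w = (\<Sum>j. fst (v j) * cnj (fst (w j)) + snd (v j) * cnj (snd (w j)))"

definition Hnorm :: "hvec \<Rightarrow> real" where
  "Hnorm h = sqrt (\<Sum>j. (cmod (fst (h j)))\<^sup>2 + (cmod (snd (h j)))\<^sup>2)"

definition Pn :: "(nat \<Rightarrow> real) \<Rightarrow> real \<Rightarrow> real \<Rightarrow> nat \<Rightarrow> hvec \<Rightarrow> hvec" where
  "Pn \<mu> \<rho> \<alpha> n v = (THE p. p \<in> Hn \<mu> \<rho> \<alpha> n \<and>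
      (\<forall>w \<in> Hn \<mu> \<rho> \<alpha> n. hinner (\<lambda>j. v j - p j) w = 0))"

definition Aop :: "(nat \<Rightarrow> real) \<Rightarrow> real \<Rightarrow> real \<Rightarrow> hvec \<Rightarrow> hvec" where
  "Aop \<mu> \<rho> \<alpha> h = (\<lambda>j. (complex_of_real (sqrt (\<mu> j)) * snd (h j),
       - complex_of_real (sqrt (\<mu> j)) * fst (h j) - complex_of_real (\<rho> * \<mu> j powr \<alpha>) * snd (h j)))"

definition An :: "(nat \<Rightarrow> real) \<Rightarrow> real \<Rightarrow> real \<Rightarrow> nat \<Rightarrow> hvec \<Rightarrow> hvec" where
  "An \<mu> \<rho> \<alpha> n h = (if h \<in> Hn \<mu> \<rho> \<alpha> n then Aop \<mu> \<rho> \<alpha> h else (\<lambda>j. (0, 0)))"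

definition semi :: "(nat \<Rightarrow> real) \<Rightarrow> real \<Rightarrow> real \<Rightarrow> nat \<Rightarrow> real \<Rightarrow> hvec \<Rightarrow> hvec" where
  "semi \<mu> \<rho> \<alpha> n \<tau> h = (\<lambda>j. \<Sum>i. (\<tau> ^ i / fact i) *\<^sub>R ((An \<mu> \<rho> \<alpha> n ^^ i) h j))"

definition Gop :: "(nat \<Rightarrow> real) \<Rightarrow> real \<Rightarrow> (nat \<Rightarrow> complex) \<Rightarrow> hvec" where
  "Gop \<mu> \<gamma> u = (\<lambda>j. (0, complex_of_real (\<mu> j powr (- \<gamma>)) * u j))"

definition Gn :: "(nat \<Rightarrow> real) \<Rightarrow> real \<Rightarrow> real \<Rightarrow> real \<Rightarrow> nat \<Rightarrow> (nat \<Rightarrow> complex) \<Rightarrow> hvec" where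
  "Gn \<mu> \<rho> \<alpha> \<gamma> n u = Pn \<mu> \<rho> \<alpha> n (Gop \<mu> \<gamma> u)"

definition L2sq :: "real \<Rightarrow> (real \<Rightarrow> nat \<Rightarrow> complex) \<Rightarrow> ennreal" where
  "L2sq t u = (\<integral>\<^sup>+ s. (\<Sum>j. ennreal ((cmod (u s j))\<^sup>2)) * indicator {0..t} s \<partial>lborel)"

definition L2ctrl :: "real \<Rightarrow> (real \<Rightarrow> nat \<Rightarrow> complex) set" where
  "L2ctrl t = {u. (\<forall>j. (\<lambda>s. u s j) \<in> borel_measurable (restrict_space lborel {0..t}))
                  \<and> L2sq t u < \<infinity>}"

definition L2norm :: "real \<Rightarrow> (real \<Rightarrow> nat \<Rightarrow> complex) \<Rightarrow> real" where
  "L2norm t u = sqrt (enn2real (L2sq t u))"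

definition Ysol :: "(nat \<Rightarrow> real) \<Rightarrow> real \<Rightarrow> real \<Rightarrow> real \<Rightarrow> nat \<Rightarrow> hvec
                     \<Rightarrow> (real \<Rightarrow> nat \<Rightarrow> complex) \<Rightarrow> real \<Rightarrow> hvec" where
  "Ysol \<mu> \<rho> \<alpha> \<gamma> n h u \<tau> = (\<lambda>j. semi \<mu> \<rho> \<alpha> n \<tau> h j +
      set_lebesgue_integral lborel {0..\<tau>}
        (\<lambda>s. semi \<mu> \<rho> \<alpha> n (\<tau> - s) (Gn \<mu> \<rho> \<alpha> \<gamma> n (u s)) j))"

definition Energy :: "(nat \<Rightarrow> real) \<Rightarrow> real \<Rightarrow> real \<Rightarrow> real \<Rightarrow> nat \<Rightarrow> real \<Rightarrow> hvec \<Rightarrow> real" where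
  "Energy \<mu> \<rho> \<alpha> \<gamma> n t h =
     Inf (L2norm t ` {u \<in> L2ctrl t. Ysol \<mu> \<rho> \<alpha> \<gamma> n h u t = (\<lambda>j. (0, 0))})"

end

theory Submission
  imports Defs "HOL-Real_Asymp.Real_Asymp"
begin

text \<open>
  In the eigenbasis the system decouples into two-dimensional modes. The eigenvalues of mode k
  are the roots l+ and l- of z^2 + \<rho> \<mu>_k powr \<alpha> z + \<mu>_k; their real parts are at most
  -\<kappa>_k, where \<kappa>_k \<ge> c \<mu>_k powr (1 - \<alpha>) once \<mu>_k \<ge> 1.
  Let \<phi> be a quintic smoothstep falling from 1 at t/2 to 0 at t, with \<phi>' = \<phi>'' = 0 at both
  ends, and let d = l+ - l-. The control of mode k vanishes on [0, t/2] and equals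
  \<mu>_k powr \<gamma> (A exp (s l+) (\<phi>'' + d \<phi>') + B exp (s l-) (\<phi>'' - d \<phi>')) on [t/2, t], where A, B
  are the eigen-coordinates of the initial state. Along each eigendirection the Duhamel integrand
  is then an exact derivative, and its integral cancels exp (t l+) A, resp. exp (t l-) B.
  The control is bounded by a polynomial in \<mu>_k times exp (- \<kappa>_k t / 2), which tends to 0 as
  k \<rightarrow> \<infinity>; a bound uniform in k yields an energy estimate independent of n.
\<close>

lemma sums_Pair: "f sums x \<Longrightarrow> g sums y \<Longrightarrow> (\<lambda>i. (f i, g i)) sums (x, y)"
proof -
  assume f: "f sums x" and g: "g sums y"
  have "(\<Sum>i<m. (f i, g i)) = (\<Sum>i<m. f i, \<Sum>i<m. g i)" for m
    by (induction m) (auto simp: zero_prod_def)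
  then show ?thesis
    using tendsto_Pair[OF f[unfolded sums_def] g[unfolded sums_def]] by (simp add: sums_def)
qed

lemma exp_series_mult_sums:
  "(\<lambda>i. (\<tau> ^ i / fact i) *\<^sub>R (c * l ^ i)) sums (c * exp (complex_of_real \<tau> * l))"
proof -
  have "(\<lambda>i. c * ((complex_of_real \<tau> * l) ^ i /\<^sub>R fact i)) sums (c * exp (complex_of_real \<tau> * l))"
    by (intro sums_mult exp_converges)
  then show ?thesis
    by (simp add: scaleR_conv_of_real power_mult_distrib field_simps)
qed

lemma has_integral_Pair:
  assumes "(f has_integral x) S" "(g has_integral y) S"
  shows "((\<lambda>s. (f s, g s)) has_integral (x, y)) S"
proof -
  have "((\<lambda>s. (f s, 0) + (0, g s)) has_integral ((x, 0) + (0, y))) S"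
    by (intro has_integral_add has_integral_linear[OF assms(1), unfolded o_def]
        has_integral_linear[OF assms(2), unfolded o_def] bounded_linear_Pair bounded_linear_ident bounded_linear_zero)
  then show ?thesis by simp
qed

lemma set_lebesgue_integral_eq_if_has_integral:
  fixes f :: "real \<Rightarrow> 'a::euclidean_space"
  assumes "continuous_on {a..b} f" "(f has_integral I) {a..b}"
  shows "set_lebesgue_integral lborel {a..b} f = I"
  using set_borel_integral_eq_integral(2)[OF borel_integrable_atLeastAtMost'[OF assms(1)]]
    integral_unique[OF assms(2)] by simp

section \<open>A smooth cutoff\<close>

definition smoothstep :: "'a::real_normed_field \<Rightarrow> 'a" where
  "smoothstep w = 10 * w ^ 3 - 15 * w ^ 4 + 6 * w ^ 5"

definition smoothstep' :: "'a::real_normed_field \<Rightarrow> 'a" where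
  "smoothstep' w = 30 * w\<^sup>2 * (1 - w)\<^sup>2"

definition smoothstep'' :: "'a::real_normed_field \<Rightarrow> 'a" where
  "smoothstep'' w = 60 * w * (1 - w) * (1 - 2 * w)"

lemma has_field_derivative_smoothstep: "(smoothstep has_field_derivative smoothstep' w) (at w)"
  unfolding smoothstep_def smoothstep'_def
  by (rule derivative_eq_intros refl)+
    (simp add: power2_eq_square power3_eq_cube power4_eq_xxxx eval_nat_numeral algebra_simps)

lemma has_field_derivative_smoothstep': "(smoothstep' has_field_derivative smoothstep'' w) (at w)"
  unfolding smoothstep'_def smoothstep''_def
  by (rule derivative_eq_intros refl)+ (simp add: power2_eq_square algebra_simps)

lemma mult_one_minus_le_quarter: "(w::real) * (1 - w) \<le> 1/4"
proof -
  have "0 \<le> (w - 1/2)\<^sup>2" by simp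
  then show ?thesis by (simp add: power2_eq_square algebra_simps)
qed

lemma abs_smoothstep'_le:
  assumes "0 \<le> w" "w \<le> (1::real)"
  shows "\<bar>smoothstep' w\<bar> \<le> 2"
proof -
  have "0 \<le> w * (1 - w)" "w * (1 - w) \<le> 1/4"
    using assms mult_one_minus_le_quarter by auto
  then have "(w * (1 - w))\<^sup>2 \<le> (1/4)\<^sup>2" by (intro power_mono)
  then have "w\<^sup>2 * (1 - w)\<^sup>2 \<le> 1/16" by (simp add: power_mult_distrib power_divide)
  then show ?thesis by (simp add: smoothstep'_def)
qed

lemma abs_smoothstep''_le:
  assumes "0 \<le> w" "w \<le> (1::real)"
  shows "\<bar>smoothstep'' w\<bar> \<le> 15"
proof -
  have p: "0 \<le> w * (1 - w)" "w * (1 - w) \<le> 1/4"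
    using assms mult_one_minus_le_quarter by auto
  have "\<bar>smoothstep'' w\<bar> = 60 * (w * (1 - w)) * \<bar>1 - 2 * w\<bar>"
    using assms by (simp add: smoothstep''_def abs_mult)
  also have "\<dots> \<le> 60 * (1/4) * 1"
    using p assms by (intro mult_mono) auto
  finally show ?thesis by simp
qed

definition cutoff :: "real \<Rightarrow> complex \<Rightarrow> complex" where
  "cutoff t z = 1 - smoothstep (2 / of_real t * z - 1)"

definition cutoff' :: "real \<Rightarrow> complex \<Rightarrow> complex" where
  "cutoff' t z = - (2 / of_real t) * smoothstep' (2 / of_real t * z - 1)"

definition cutoff'' :: "real \<Rightarrow> complex \<Rightarrow> complex" where
  "cutoff'' t z = - (2 / of_real t)\<^sup>2 * smoothstep'' (2 / of_real t * z - 1)"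

lemma has_field_derivative_cutoff: "(cutoff t has_field_derivative cutoff' t z) (at z)"
proof -
  have "((\<lambda>z. 2 / of_real t * z - 1) has_field_derivative 2 / of_real t) (at z)"
    by (rule DERIV_diff[OF DERIV_cmult[OF DERIV_ident] DERIV_const, THEN DERIV_cong]) simp
  from DERIV_diff[OF DERIV_const DERIV_chain2[OF has_field_derivative_smoothstep this]]
  show ?thesis unfolding cutoff_def cutoff'_def by (rule DERIV_cong) simp
qed

lemma has_field_derivative_cutoff': "(cutoff' t has_field_derivative cutoff'' t z) (at z)"
proof -
  have "((\<lambda>z. 2 / of_real t * z - 1) has_field_derivative 2 / of_real t) (at z)"
    by (rule DERIV_diff[OF DERIV_cmult[OF DERIV_ident] DERIV_const, THEN DERIV_cong]) simp
  from DERIV_cmult[OF DERIV_chain2[OF has_field_derivative_smoothstep' this], of "- (2 / of_real t)"]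
  show ?thesis unfolding cutoff'_def cutoff''_def by (rule DERIV_cong) (simp add: power2_eq_square)
qed

lemma cutoff_boundary_values:
  assumes "t \<noteq> 0"
  shows "cutoff t (of_real (t/2)) = 1" "cutoff' t (of_real (t/2)) = 0" "cutoff'' t (of_real (t/2)) = 0"
    and "cutoff t (of_real t) = 0" "cutoff' t (of_real t) = 0"
  using assms
  by (simp_all add: cutoff_def cutoff'_def cutoff''_def smoothstep_def smoothstep'_def smoothstep''_def)

lemma norm_cutoff'_le:
  assumes "0 < t" "t/2 \<le> \<sigma>" "\<sigma> \<le> t"
  shows "norm (cutoff' t (of_real \<sigma>)) \<le> 4 / t"
proof -
  define w where "w = 2 / t * \<sigma> - 1"
  have w: "0 \<le> w" "w \<le> 1" using assms by (auto simp: w_def field_simps)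
  have eq: "cutoff' t (of_real \<sigma>) = of_real (- (2 / t) * smoothstep' w)"
    by (simp add: cutoff'_def smoothstep'_def w_def)
  have "norm (cutoff' t (of_real \<sigma>)) = 2 / t * \<bar>smoothstep' w\<bar>"
    unfolding eq norm_of_real using assms(1) by (simp add: abs_mult)
  also have "\<dots> \<le> 2 / t * 2"
    using abs_smoothstep'_le[OF w] assms(1) by (intro mult_left_mono) auto
  finally show ?thesis by simp
qed

lemma norm_cutoff''_le:
  assumes "0 < t" "t/2 \<le> \<sigma>" "\<sigma> \<le> t"
  shows "norm (cutoff'' t (of_real \<sigma>)) \<le> 60 / t\<^sup>2"
proof -
  define w where "w = 2 / t * \<sigma> - 1"
  have w: "0 \<le> w" "w \<le> 1" using assms by (auto simp: w_def field_simps)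
  have eq: "cutoff'' t (of_real \<sigma>) = of_real (- (2 / t)\<^sup>2 * smoothstep'' w)"
    by (simp add: cutoff''_def smoothstep''_def w_def)
  have "norm (cutoff'' t (of_real \<sigma>)) = (2 / t)\<^sup>2 * \<bar>smoothstep'' w\<bar>"
    unfolding eq norm_of_real by (simp add: abs_mult)
  also have "\<dots> \<le> (2 / t)\<^sup>2 * 15"
    using abs_smoothstep''_le[OF w] by (intro mult_left_mono) auto
  finally show ?thesis by (simp add: power_divide)
qed

section \<open>Steering a two-dimensional mode to rest\<close>

definition steer :: "(complex \<Rightarrow> complex) \<Rightarrow> (complex \<Rightarrow> complex) \<Rightarrow> complex \<Rightarrow> complex
    \<Rightarrow> complex \<Rightarrow> complex \<Rightarrow> complex \<Rightarrow> complex" where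
  "steer \<phi>' \<phi>'' l1 l2 A B z =
     A * exp (z * l1) * (\<phi>'' z + (l1 - l2) * \<phi>' z) +
     B * exp (z * l2) * (\<phi>'' z - (l1 - l2) * \<phi>' z)"

lemma steer_swap: "steer \<phi>' \<phi>'' l2 l1 B A = steer \<phi>' \<phi>'' l1 l2 A B"
  by (rule ext) (simp add: steer_def algebra_simps)

lemma has_integral_steer:
  fixes a t0 t1 :: real and l1 l2 A B :: complex
  assumes "a \<le> t0" "t0 \<le> t1" "l1 \<noteq> l2"
    and deriv: "\<And>z. (\<phi> has_field_derivative \<phi>' z) (at z)" "\<And>z. (\<phi>' has_field_derivative \<phi>'' z) (at z)"
    and start: "\<phi> (of_real t0) = 1" "\<phi>' (of_real t0) = 0" "\<phi>'' (of_real t0) = 0"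
    and stop: "\<phi> (of_real t1) = 0" "\<phi>' (of_real t1) = 0"
  shows "((\<lambda>s. exp (of_real (t1 - s) * l1) * steer \<phi>' \<phi>'' l1 l2 A B (of_real (max s t0)) / (l1 - l2))
           has_integral - (exp (of_real t1 * l1) * A)) {a..t1}"
proof -
  define d where "d = l1 - l2"
  have d: "d \<noteq> 0" using assms(3) by (simp add: d_def)
  let ?f = "\<lambda>s. exp (of_real (t1 - s) * l1) * steer \<phi>' \<phi>'' l1 l2 A B (of_real (max s t0)) / (l1 - l2)"
  have "(?f has_integral 0) {a..t0}"
    by (rule has_integral_is_0) (auto simp: max_absorb2 steer_def start)
  \<comment> \<open>On [t0, t1] the integrand is the derivative of F.\<close>
  define F where "F z = (A * exp (of_real t1 * l1) * (\<phi>' z + d * \<phi> z)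
      + B * exp (of_real t1 * l1 - z * d) * \<phi>' z) / d" for z
  define F' where "F' z = (A * exp (of_real t1 * l1) * (\<phi>'' z + d * \<phi>' z)
      + B * exp (of_real t1 * l1 - z * d) * (\<phi>'' z - d * \<phi>' z)) / d" for z
  have "(F has_field_derivative F' z) (at z)" for z
    unfolding F_def F'_def using d
    by (auto intro!: derivative_eq_intros deriv simp: field_simps)
  then have FTC: "((\<lambda>s. F' (of_real s)) has_integral (F (of_real t1) - F (of_real t0))) {t0..t1}"
    by (intro fundamental_theorem_of_calculus has_vector_derivative_real_field assms(2))
  have eq: "F' (of_real s) = ?f s" if "s \<in> {t0..t1}" for s
  proof -
    have e: "exp (of_real (t1 - s) * l1) * exp (of_real s * l1) = exp (of_real t1 * l1)"
      "exp (of_real (t1 - s) * l1) * exp (of_real s * l2) = exp (of_real t1 * l1 - of_real s * d)"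
      by (simp_all add: exp_add[symmetric] d_def algebra_simps)
    have "?f s = exp (of_real (t1 - s) * l1) * steer \<phi>' \<phi>'' l1 l2 A B (of_real s) / d"
      using that by (simp add: max_absorb1 d_def)
    also have "\<dots> = F' (of_real s)"
      unfolding steer_def F'_def d_def[symmetric] e[symmetric] by (simp add: algebra_simps)
    finally show ?thesis by (rule sym)
  qed
  have val: "F (of_real t1) - F (of_real t0) = - (exp (of_real t1 * l1) * A)"
    using d by (simp add: F_def start stop field_simps)
  have "(?f has_integral - (exp (of_real t1 * l1) * A)) {t0..t1}"
    using has_integral_eq[OF eq FTC] unfolding val .
  with \<open>(?f has_integral 0) {a..t0}\<close> show ?thesis
    using has_integral_combine[of a t0 t1 ?f 0] assms(1,2) by simp
qed

lemma norm_exp_of_real_mult_le: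
  assumes "Re l \<le> - \<kappa>" "0 \<le> \<kappa>" "0 \<le> \<tau>" "\<tau> \<le> \<sigma>"
  shows "norm (exp (of_real \<sigma> * l)) \<le> exp (- \<kappa> * \<tau>)"
proof -
  have "\<sigma> * Re l \<le> \<sigma> * (- \<kappa>)" using assms by (intro mult_left_mono) auto
  also have "\<dots> \<le> \<tau> * (- \<kappa>)" using assms by (intro mult_right_mono_neg) auto
  finally show ?thesis by (simp add: mult.commute)
qed

lemma norm_steer_le:
  assumes "Re l1 \<le> - \<kappa>" "Re l2 \<le> - \<kappa>" "0 \<le> \<kappa>" "0 < t" "t / 2 \<le> \<sigma>" "\<sigma> \<le> t"
  shows "norm (steer (cutoff' t) (cutoff'' t) l1 l2 A B (of_real \<sigma>))
           \<le> (norm A + norm B) * (exp (- \<kappa> * (t / 2)) * (60 / t\<^sup>2 + norm (l1 - l2) * (4 / t)))"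
proof -
  let ?E = "exp (- \<kappa> * (t / 2))" and ?P = "60 / t\<^sup>2 + norm (l1 - l2) * (4 / t)"
  have c: "norm (cutoff'' t (of_real \<sigma>) + (l1 - l2) * cutoff' t (of_real \<sigma>)) \<le> ?P"
    "norm (cutoff'' t (of_real \<sigma>) - (l1 - l2) * cutoff' t (of_real \<sigma>)) \<le> ?P"
    using norm_triangle_ineq[of "cutoff'' t (of_real \<sigma>)" "(l1 - l2) * cutoff' t (of_real \<sigma>)"]
      norm_triangle_ineq4[of "cutoff'' t (of_real \<sigma>)" "(l1 - l2) * cutoff' t (of_real \<sigma>)"]
      norm_cutoff'_le[OF assms(4-6)] norm_cutoff''_le[OF assms(4-6)]
      mult_left_mono[OF norm_cutoff'_le[OF assms(4-6)] norm_ge_zero, of "l1 - l2"]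
    by (simp_all add: norm_mult)
  have "0 \<le> t / 2" using assms(4) by simp
  note e = norm_exp_of_real_mult_le[OF assms(1,3) this assms(5)]
    norm_exp_of_real_mult_le[OF assms(2,3) this assms(5)]
  have "norm (A * exp (of_real \<sigma> * l1) * (cutoff'' t (of_real \<sigma>) + (l1 - l2) * cutoff' t (of_real \<sigma>)))
      \<le> norm A * (?E * ?P)"
    unfolding norm_mult mult.assoc using e(1) c(1) by (intro mult_left_mono mult_mono) auto
  moreover have "norm (B * exp (of_real \<sigma> * l2) * (cutoff'' t (of_real \<sigma>) - (l1 - l2) * cutoff' t (of_real \<sigma>)))
      \<le> norm B * (?E * ?P)"
    unfolding norm_mult mult.assoc using e(2) c(2) by (intro mult_left_mono mult_mono) auto
  ultimately show ?thesis
    unfolding steer_def distrib_right by (rule order_trans[OF norm_triangle_ineq add_mono])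
qed

section \<open>Roots of z^2 + b z + m\<close>

lemma quadratic_roots_csqrt:
  fixes b m :: real
  defines "d \<equiv> csqrt (of_real (b\<^sup>2 - 4 * m))"
  shows "((- of_real b + d) / 2)\<^sup>2 = - of_real m - of_real b * ((- of_real b + d) / 2)"
    and "((- of_real b - d) / 2)\<^sup>2 = - of_real m - of_real b * ((- of_real b - d) / 2)"
proof -
  have d2: "d * d = of_real b * of_real b - 4 * of_real m"
    using power2_csqrt[of "of_real (b\<^sup>2 - 4 * m)"] by (simp add: d_def power2_eq_square)
  have id: "((- B + d) / 2)\<^sup>2 = - M - B * ((- B + d) / 2) + (d * d - B * B + 4 * M) / 4"
    "((- B - d) / 2)\<^sup>2 = - M - B * ((- B - d) / 2) + (d * d - B * B + 4 * M) / 4" for B M :: complex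
    by (simp_all add: power2_eq_square field_simps)
  show "((- of_real b + d) / 2)\<^sup>2 = - of_real m - of_real b * ((- of_real b + d) / 2)"
    "((- of_real b - d) / 2)\<^sup>2 = - of_real m - of_real b * ((- of_real b - d) / 2)"
    using id[of "of_real b" "of_real m"] unfolding d2 by simp_all
qed

lemma Re_quadratic_roots_le:
  fixes b m :: real
  assumes b: "0 < b" and m: "0 < m"
  defines "d \<equiv> csqrt (of_real (b\<^sup>2 - 4 * m))"
  shows "Re ((- of_real b + d) / 2) \<le> - min (b / 2) (m / b)"
    and "Re ((- of_real b - d) / 2) \<le> - min (b / 2) (m / b)"
proof -
  have "Re ((- of_real b - d) / 2) = (- b - Re d) / 2" by simp
  also have "\<dots> \<le> - (b / 2)" using Re_csqrt[of "of_real (b\<^sup>2 - 4 * m)"] by (simp add: d_def)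
  also have "\<dots> \<le> - min (b / 2) (m / b)"
    unfolding neg_le_iff_le by (rule min.cobounded1)
  finally show "Re ((- of_real b - d) / 2) \<le> - min (b / 2) (m / b)" .
  show "Re ((- of_real b + d) / 2) \<le> - min (b / 2) (m / b)"
  proof (cases "0 \<le> b\<^sup>2 - 4 * m")
    case True
    define r where "r = sqrt (b\<^sup>2 - 4 * m)"
    have r: "0 \<le> r" "r\<^sup>2 = b\<^sup>2 - 4 * m" using True by (simp_all add: r_def)
    then have "r\<^sup>2 \<le> b\<^sup>2" using m by linarith
    then have "r \<le> b" using b by (rule power2_le_imp_le[OF _ less_imp_le])
    \<comment> \<open>The product of the two roots is m, so the root closer to 0 is at most -m/b.\<close>
    have "(b - r) * (b + r) = 4 * m" using r by (simp add: algebra_simps power2_eq_square)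
    moreover have "(b - r) * (b + r) \<le> (b - r) * (2 * b)"
      using \<open>r \<le> b\<close> by (intro mult_left_mono) auto
    ultimately have "2 * m / b \<le> b - r" using b by (simp add: field_simps)
    have "d = of_real r" using True by (simp add: d_def r_def)
    then have "Re ((- of_real b + d) / 2) = (r - b) / 2" by simp
    also have "\<dots> \<le> - (m / b)" using \<open>2 * m / b \<le> b - r\<close> by simp
    also have "\<dots> \<le> - min (b / 2) (m / b)"
      unfolding neg_le_iff_le by (rule min.cobounded2)
    finally show ?thesis .
  next
    case False
    then have "Re ((- of_real b + d) / 2) = - (b / 2)" by (simp add: d_def)
    also have "\<dots> \<le> - min (b / 2) (m / b)"
      unfolding neg_le_iff_le by (rule min.cobounded1)
    finally show ?thesis .
  qed
qed

lemma norm_csqrt_discriminant_le: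
  fixes b m :: real
  assumes "0 \<le> b" "0 \<le> m"
  shows "norm (csqrt (of_real (b\<^sup>2 - 4 * m))) \<le> b + 2 * sqrt m"
proof -
  have "\<bar>b\<^sup>2 - 4 * m\<bar> \<le> (b + 2 * sqrt m)\<^sup>2"
    using assms by (simp add: power2_sum power_mult_distrib abs_le_iff)
  then have "sqrt \<bar>b\<^sup>2 - 4 * m\<bar> \<le> b + 2 * sqrt m"
    using assms by (simp add: real_le_lsqrt)
  then show ?thesis by (simp only: norm_csqrt norm_of_real)
qed

lemma norm_quadratic_roots_le:
  fixes b m :: real
  assumes "0 \<le> b" "0 \<le> m"
  defines "d \<equiv> csqrt (of_real (b\<^sup>2 - 4 * m))"
  shows "norm ((- of_real b + d) / 2) \<le> b + sqrt m" and "norm ((- of_real b - d) / 2) \<le> b + sqrt m"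
proof -
  have "norm d \<le> b + 2 * sqrt m" unfolding d_def using assms(1,2) by (rule norm_csqrt_discriminant_le)
  moreover have "norm (- of_real b + d) \<le> b + norm d" "norm (- of_real b - d) \<le> b + norm d"
    using norm_triangle_ineq[of "- of_real b" d] norm_triangle_ineq4[of "- of_real b" d] assms
    by simp_all
  ultimately show "norm ((- of_real b + d) / 2) \<le> b + sqrt m" "norm ((- of_real b - d) / 2) \<le> b + sqrt m"
    by (simp_all add: norm_divide)
qed

text \<open>(A, B) are the coordinates of (r (A + B), A l1 + B l2) in the basis (r, l1), (r, l2).\<close>
lemma coordinates_norm_le:
  fixes A B l1 l2 :: complex and r :: real
  assumes "0 < r" "l1 \<noteq> l2"
  shows "norm A + norm B \<le> (2 + (norm l1 + norm l2) / r) / norm (l1 - l2)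
           * (norm (of_real r * (A + B)) + norm (A * l1 + B * l2))"
proof -
  define x where "x = A + B"
  define y where "y = A * l1 + B * l2"
  define q where "q = (norm l1 + norm l2) / r"
  have q: "0 \<le> q" "norm l1 * norm x + norm l2 * norm x = q * (r * norm x)"
    using assms(1) by (simp_all add: q_def field_simps)
  have "A * (l1 - l2) = y - l2 * x" "B * (l1 - l2) = l1 * x - y"
    by (simp_all add: x_def y_def algebra_simps)
  then have "norm A * norm (l1 - l2) \<le> norm y + norm l2 * norm x"
    "norm B * norm (l1 - l2) \<le> norm l1 * norm x + norm y"
    by (metis norm_mult norm_triangle_ineq4)+
  then have "(norm A + norm B) * norm (l1 - l2) \<le> 2 * norm y + q * (r * norm x)"
    unfolding distrib_right using q(2) by linarith
  also have "\<dots> \<le> (2 + q) * (r * norm x + norm y)"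
    using q(1) assms(1) by (simp add: algebra_simps)
  finally have "norm A + norm B \<le> (2 + q) * (r * norm x + norm y) / norm (l1 - l2)"
    using assms(2) by (simp add: pos_le_divide_eq)
  then show ?thesis
    using assms(1) by (simp add: x_def [symmetric] y_def [symmetric] q_def [symmetric] norm_mult)
qed

section \<open>The decoupled system\<close>

locale damped_modes =
  fixes \<mu> :: "nat \<Rightarrow> real" and \<rho> \<alpha> \<gamma> :: real
  assumes mu_pos: "\<And>k. 0 < \<mu> k"
    and rho_pos: "0 < \<rho>"
    and nondeg: "\<And>k. \<rho>\<^sup>2 \<noteq> 4 * \<mu> k powr (1 - 2 * \<alpha>)"
begin

abbreviation "lp k \<equiv> lam_p \<mu> \<rho> \<alpha> k"
abbreviation "lm k \<equiv> lam_m \<mu> \<rho> \<alpha> k"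

definition damping :: "nat \<Rightarrow> real" where
  "damping k = \<rho> * \<mu> k powr \<alpha>"

lemma damping_pos: "0 < damping k"
  using mu_pos[of k] rho_pos by (simp add: damping_def)

lemma damping_sq: "\<rho>\<^sup>2 * \<mu> k powr (2 * \<alpha>) = (damping k)\<^sup>2"
  using mu_pos[of k] by (simp add: damping_def power_mult_distrib powr_realpow[symmetric] powr_powr mult.commute)

lemma lam_p_eq: "lp k = (- of_real (damping k) + csqrt (of_real ((damping k)\<^sup>2 - 4 * \<mu> k))) / 2"
  by (simp add: lam_p_def damping_def [symmetric] damping_sq)

lemma lam_m_eq: "lm k = (- of_real (damping k) - csqrt (of_real ((damping k)\<^sup>2 - 4 * \<mu> k))) / 2"
  by (simp add: lam_m_def damping_def [symmetric] damping_sq)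

lemma lam_p_minus_lam_m: "lp k - lm k = csqrt (of_real ((damping k)\<^sup>2 - 4 * \<mu> k))"
  by (simp add: lam_p_eq lam_m_eq field_simps)

lemma lam_p_neq_lam_m: "lp k \<noteq> lm k"
proof
  assume "lp k = lm k"
  then have "csqrt (of_real ((damping k)\<^sup>2 - 4 * \<mu> k)) = 0"
    by (metis lam_p_minus_lam_m right_minus_eq)
  then have "(damping k)\<^sup>2 = 4 * \<mu> k"
    by (simp only: csqrt_eq_0 of_real_eq_0_iff)
  then have "\<rho>\<^sup>2 * \<mu> k powr (2 * \<alpha>) = 4 * \<mu> k"
    by (simp add: damping_sq)
  moreover have "\<mu> k powr (2 * \<alpha>) * \<mu> k powr (1 - 2 * \<alpha>) = \<mu> k"
    using mu_pos[of k] by (simp add: powr_add [symmetric])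
  ultimately have "\<rho>\<^sup>2 * \<mu> k = 4 * \<mu> k powr (1 - 2 * \<alpha>) * \<mu> k"
    by (metis mult.assoc mult.commute)
  with nondeg[of k] mu_pos[of k] show False by simp
qed

lemma lam_p_root: "(lp k)\<^sup>2 = - of_real (\<mu> k) - of_real (damping k) * lp k"
  unfolding lam_p_eq by (rule quadratic_roots_csqrt)

lemma lam_m_root: "(lm k)\<^sup>2 = - of_real (\<mu> k) - of_real (damping k) * lm k"
  unfolding lam_m_eq by (rule quadratic_roots_csqrt)

definition eigcomb :: "nat \<Rightarrow> (nat \<Rightarrow> complex) \<Rightarrow> (nat \<Rightarrow> complex) \<Rightarrow> hvec" where
  "eigcomb n a b = (\<lambda>j. \<Sum>k\<le>n. csc (a k) (Phi_p \<mu> \<rho> \<alpha> k j) + csc (b k) (Phi_m \<mu> \<rho> \<alpha> k j))"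

lemma Hn_iff: "h \<in> Hn \<mu> \<rho> \<alpha> n \<longleftrightarrow> (\<exists>a b. h = eigcomb n a b)"
  by (simp add: Hn_def eigcomb_def)

lemma eigcomb_in_Hn: "eigcomb n a b \<in> Hn \<mu> \<rho> \<alpha> n"
  using Hn_iff by blast

lemma eigcomb_apply:
  "eigcomb n a b j = (if j \<le> n then (of_real (sqrt (\<mu> j)) * (a j + b j), a j * lp j + b j * lm j) else (0, 0))"
proof -
  have "eigcomb n a b j = (\<Sum>k\<le>n. if k = j then (of_real (sqrt (\<mu> j)) * (a j + b j), a j * lp j + b j * lm j) else 0)"
    unfolding eigcomb_def
    by (intro sum.cong) (auto simp: Phi_p_def Phi_m_def csc_def algebra_simps zero_prod_def)
  then show ?thesis by (simp add: zero_prod_def)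
qed

lemma Aop_eigcomb: "Aop \<mu> \<rho> \<alpha> (eigcomb n a b) = eigcomb n (\<lambda>k. lp k * a k) (\<lambda>k. lm k * b k)"
proof
  fix j
  have "of_real (sqrt (\<mu> j)) * of_real (sqrt (\<mu> j)) = complex_of_real (\<mu> j)"
    using mu_pos[of j] by (simp flip: of_real_mult)
  then have "- of_real (sqrt (\<mu> j)) * (of_real (sqrt (\<mu> j)) * (a j + b j))
      - of_real (damping j) * (a j * lp j + b j * lm j) = a j * (lp j)\<^sup>2 + b j * (lm j)\<^sup>2"
    unfolding lam_p_root lam_m_root by (simp add: algebra_simps)
  then show "Aop \<mu> \<rho> \<alpha> (eigcomb n a b) j = eigcomb n (\<lambda>k. lp k * a k) (\<lambda>k. lm k * b k) j"
    by (simp add: Aop_def eigcomb_apply damping_def power2_eq_square algebra_simps)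
qed

lemma An_power_eigcomb:
  "(An \<mu> \<rho> \<alpha> n ^^ i) (eigcomb n a b) = eigcomb n (\<lambda>k. lp k ^ i * a k) (\<lambda>k. lm k ^ i * b k)"
proof (induction i)
  case (Suc i)
  then show ?case
    by (simp add: An_def eigcomb_in_Hn Aop_eigcomb mult.assoc)
qed simp

lemma semi_eigcomb:
  "semi \<mu> \<rho> \<alpha> n \<tau> (eigcomb n a b) =
     eigcomb n (\<lambda>k. exp (of_real \<tau> * lp k) * a k) (\<lambda>k. exp (of_real \<tau> * lm k) * b k)"
proof
  fix j
  let ?s = "of_real (sqrt (\<mu> j)) :: complex"
  have "(\<lambda>i. (\<tau> ^ i / fact i) *\<^sub>R ((An \<mu> \<rho> \<alpha> n ^^ i) (eigcomb n a b) j)) sums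
      (if j \<le> n then (?s * a j * exp (of_real \<tau> * lp j) + ?s * b j * exp (of_real \<tau> * lm j),
                       a j * lp j * exp (of_real \<tau> * lp j) + b j * lm j * exp (of_real \<tau> * lm j))
       else (0, 0))"
  proof (cases "j \<le> n")
    case True
    have "(\<lambda>i. ((\<tau> ^ i / fact i) *\<^sub>R (?s * a j * lp j ^ i) + (\<tau> ^ i / fact i) *\<^sub>R (?s * b j * lm j ^ i),
                (\<tau> ^ i / fact i) *\<^sub>R (a j * lp j * lp j ^ i) + (\<tau> ^ i / fact i) *\<^sub>R (b j * lm j * lm j ^ i)))
        sums (?s * a j * exp (of_real \<tau> * lp j) + ?s * b j * exp (of_real \<tau> * lm j),
              a j * lp j * exp (of_real \<tau> * lp j) + b j * lm j * exp (of_real \<tau> * lm j))"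
      by (intro sums_Pair sums_add exp_series_mult_sums)
    then show ?thesis
      using True by (simp add: An_power_eigcomb eigcomb_apply algebra_simps)
  qed (simp add: An_power_eigcomb eigcomb_apply zero_prod_def [symmetric])
  then show "semi \<mu> \<rho> \<alpha> n \<tau> (eigcomb n a b) j =
      eigcomb n (\<lambda>k. exp (of_real \<tau> * lp k) * a k) (\<lambda>k. exp (of_real \<tau> * lm k) * b k) j"
    by (auto simp: semi_def eigcomb_apply algebra_simps dest: sums_unique)
qed

lemma eigcomb_eq_0_if_hinner_self:
  assumes "hinner (eigcomb n a b) (eigcomb n a b) = 0"
  shows "eigcomb n a b = (\<lambda>j. (0, 0))"
proof -
  let ?x = "eigcomb n a b"
  have "hinner ?x ?x = (\<Sum>j\<le>n. fst (?x j) * cnj (fst (?x j)) + snd (?x j) * cnj (snd (?x j)))"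
    unfolding hinner_def by (rule suminf_finite) (auto simp: eigcomb_apply)
  also have "\<dots> = of_real (\<Sum>j\<le>n. (cmod (fst (?x j)))\<^sup>2 + (cmod (snd (?x j)))\<^sup>2)"
    unfolding of_real_sum of_real_add complex_norm_square ..
  finally have "complex_of_real (\<Sum>j\<le>n. (cmod (fst (?x j)))\<^sup>2 + (cmod (snd (?x j)))\<^sup>2) = 0"
    using assms by metis
  then have "(\<Sum>j\<le>n. (cmod (fst (?x j)))\<^sup>2 + (cmod (snd (?x j)))\<^sup>2) = 0"
    by (simp only: of_real_eq_0_iff)
  then have "\<forall>j\<le>n. ?x j = (0, 0)"
    by (simp add: sum_nonneg_eq_0_iff add_nonneg_eq_0_iff prod_eq_iff)
  then show ?thesis by (auto simp: eigcomb_apply)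
qed

lemma Pn_Hn:
  assumes "p \<in> Hn \<mu> \<rho> \<alpha> n"
  shows "Pn \<mu> \<rho> \<alpha> n p = p"
  unfolding Pn_def
proof (rule the_equality)
  show "p \<in> Hn \<mu> \<rho> \<alpha> n \<and> (\<forall>w\<in>Hn \<mu> \<rho> \<alpha> n. hinner (\<lambda>j. p j - p j) w = 0)"
    using assms by (simp add: hinner_def zero_prod_def [symmetric])
next
  fix q assume q: "q \<in> Hn \<mu> \<rho> \<alpha> n \<and> (\<forall>w\<in>Hn \<mu> \<rho> \<alpha> n. hinner (\<lambda>j. p j - q j) w = 0)"
  obtain a b a' b' where p: "p = eigcomb n a b" and q': "q = eigcomb n a' b'"
    using assms q by (auto simp: Hn_iff)
  \<comment> \<open>p - q lies in H_n and is orthogonal to H_n, hence to itself.\<close>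
  have "(\<lambda>j. p j - q j) = eigcomb n (\<lambda>k. a k - a' k) (\<lambda>k. b k - b' k)"
    unfolding p q' by (rule ext) (simp add: eigcomb_apply algebra_simps)
  then have "(\<lambda>j. p j - q j) = (\<lambda>j. (0, 0))"
    using q eigcomb_in_Hn eigcomb_eq_0_if_hinner_self by metis
  then show "q = p"
    by (metis (no_types, lifting) ext eq_iff_diff_eq_0 zero_prod_def)
qed

definition input_gain :: "nat \<Rightarrow> complex" where
  "input_gain k = of_real (\<mu> k powr (- \<gamma>)) / (lp k - lm k)"

lemma Gn_eigcomb:
  assumes "\<And>k. n < k \<Longrightarrow> w k = 0"
  shows "Gn \<mu> \<rho> \<alpha> \<gamma> n w = eigcomb n (\<lambda>k. input_gain k * w k) (\<lambda>k. - input_gain k * w k)"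
proof -
  have "Gop \<mu> \<gamma> w = eigcomb n (\<lambda>k. input_gain k * w k) (\<lambda>k. - input_gain k * w k)"
  proof
    fix j
    have "input_gain j * (lp j - lm j) = of_real (\<mu> j powr (- \<gamma>))"
      using lam_p_neq_lam_m[of j] by (simp add: input_gain_def)
    then have "input_gain j * w j * lp j - input_gain j * w j * lm j = of_real (\<mu> j powr (- \<gamma>)) * w j"
      by (metis mult.commute mult.left_commute right_diff_distrib)
    then show "Gop \<mu> \<gamma> w j = eigcomb n (\<lambda>k. input_gain k * w k) (\<lambda>k. - input_gain k * w k) j"
      using assms[of j] by (simp add: Gop_def eigcomb_apply)
  qed
  then show ?thesis
    unfolding Gn_def using Pn_Hn[OF eigcomb_in_Hn] by metis
qed

text \<open>On [0, t/2] the max freezes the argument of steer at t/2, where it vanishes because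
  cutoff' and cutoff'' do: the control of mode k is idle there.\<close>

definition mode_ctrl :: "real \<Rightarrow> nat \<Rightarrow> complex \<Rightarrow> complex \<Rightarrow> real \<Rightarrow> complex" where
  "mode_ctrl t k A B s = of_real (\<mu> k powr \<gamma>) *
     steer (cutoff' t) (cutoff'' t) (lp k) (lm k) A B (of_real (max s (t / 2)))"

definition null_ctrl ::
    "nat \<Rightarrow> real \<Rightarrow> (nat \<Rightarrow> complex) \<Rightarrow> (nat \<Rightarrow> complex) \<Rightarrow> real \<Rightarrow> nat \<Rightarrow> complex" where
  "null_ctrl n t a b s k = (if k \<le> n then mode_ctrl t k (a k) (b k) s else 0)"

lemma continuous_on_mode_ctrl: "continuous_on S (mode_ctrl t k A B)"
  unfolding mode_ctrl_def steer_def cutoff'_def cutoff''_def smoothstep'_def smoothstep''_def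
  by (intro continuous_intros)

lemma input_gain_mode_ctrl:
  "input_gain k * mode_ctrl t k A B s =
     steer (cutoff' t) (cutoff'' t) (lp k) (lm k) A B (of_real (max s (t / 2))) / (lp k - lm k)"
proof -
  have "of_real (\<mu> k powr (- \<gamma>)) * of_real (\<mu> k powr \<gamma>) = (1 :: complex)"
    using mu_pos[of k] by (simp flip: of_real_mult powr_add)
  then show ?thesis
    by (simp add: input_gain_def mode_ctrl_def)
qed

lemma mode_ctrl_has_integral:
  assumes "0 < t"
  shows "((\<lambda>s. exp (of_real (t - s) * lp k) * (input_gain k * mode_ctrl t k A B s))
           has_integral - (exp (of_real t * lp k) * A)) {0..t}"
    and "((\<lambda>s. exp (of_real (t - s) * lm k) * (- input_gain k * mode_ctrl t k A B s))
           has_integral - (exp (of_real t * lm k) * B)) {0..t}"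
proof -
  have t: "0 \<le> t / 2" "t / 2 \<le> t" "t \<noteq> 0" using assms by auto
  note steer = has_integral_steer[OF t(1,2) _ has_field_derivative_cutoff has_field_derivative_cutoff'
      cutoff_boundary_values[OF t(3)]]
  show "((\<lambda>s. exp (of_real (t - s) * lp k) * (input_gain k * mode_ctrl t k A B s))
           has_integral - (exp (of_real t * lp k) * A)) {0..t}"
    using steer[OF lam_p_neq_lam_m[of k], of A B] by (simp add: input_gain_mode_ctrl)
  have "- (x / (lp k - lm k)) = x / (lm k - lp k)" for x
    by (simp add: minus_divide_right)
  then show "((\<lambda>s. exp (of_real (t - s) * lm k) * (- input_gain k * mode_ctrl t k A B s))
           has_integral - (exp (of_real t * lm k) * B)) {0..t}"
    using steer[OF lam_p_neq_lam_m[of k, symmetric], of B A]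
    by (simp add: input_gain_mode_ctrl steer_swap)
qed

lemma null_ctrl_integrand:
  "semi \<mu> \<rho> \<alpha> n (t - s) (Gn \<mu> \<rho> \<alpha> \<gamma> n (null_ctrl n t a b s)) =
     eigcomb n (\<lambda>k. exp (of_real (t - s) * lp k) * (input_gain k * null_ctrl n t a b s k))
               (\<lambda>k. exp (of_real (t - s) * lm k) * (- input_gain k * null_ctrl n t a b s k))"
  by (simp add: Gn_eigcomb null_ctrl_def semi_eigcomb)

lemma Ysol_null_ctrl:
  assumes "0 < t"
  shows "Ysol \<mu> \<rho> \<alpha> \<gamma> n (eigcomb n a b) (null_ctrl n t a b) t = (\<lambda>j. (0, 0))"
proof
  fix j
  show "Ysol \<mu> \<rho> \<alpha> \<gamma> n (eigcomb n a b) (null_ctrl n t a b) t j = (0, 0)"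
  proof (cases "j \<le> n")
    case False
    then show ?thesis
      by (simp add: Ysol_def null_ctrl_integrand semi_eigcomb eigcomb_apply
          zero_prod_def [symmetric] set_lebesgue_integral_def)
  next
    case True
    define c1 where "c1 s = exp (of_real (t - s) * lp j) * (input_gain j * mode_ctrl t j (a j) (b j) s)" for s
    define c2 where "c2 s = exp (of_real (t - s) * lm j) * (- input_gain j * mode_ctrl t j (a j) (b j) s)" for s
    let ?r = "of_real (sqrt (\<mu> j)) :: complex"
    let ?e1 = "exp (of_real t * lp j) * a j" and ?e2 = "exp (of_real t * lm j) * b j"
    have integrand: "(\<lambda>s. semi \<mu> \<rho> \<alpha> n (t - s) (Gn \<mu> \<rho> \<alpha> \<gamma> n (null_ctrl n t a b s)) j)
        = (\<lambda>s. (?r * (c1 s + c2 s), c1 s * lp j + c2 s * lm j))"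
      using True by (auto simp: null_ctrl_integrand eigcomb_apply null_ctrl_def c1_def c2_def)
    have "(c1 has_integral - ?e1) {0..t}" "(c2 has_integral - ?e2) {0..t}"
      unfolding c1_def c2_def using mode_ctrl_has_integral[OF assms] by blast+
    then have "((\<lambda>s. (?r * (c1 s + c2 s), c1 s * lp j + c2 s * lm j))
        has_integral (?r * (- ?e1 + - ?e2), - ?e1 * lp j + - ?e2 * lm j)) {0..t}"
      by (intro has_integral_Pair has_integral_mult_right has_integral_add has_integral_mult_left)
    moreover have "continuous_on {0..t} (\<lambda>s. (?r * (c1 s + c2 s), c1 s * lp j + c2 s * lm j))"
      unfolding c1_def c2_def by (intro continuous_intros continuous_on_mode_ctrl)
    ultimately have "set_lebesgue_integral lborel {0..t}
        (\<lambda>s. semi \<mu> \<rho> \<alpha> n (t - s) (Gn \<mu> \<rho> \<alpha> \<gamma> n (null_ctrl n t a b s)) j)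
        = (?r * (- ?e1 + - ?e2), - ?e1 * lp j + - ?e2 * lm j)"
      unfolding integrand by (intro set_lebesgue_integral_eq_if_has_integral)
    then show ?thesis
      using True by (simp add: Ysol_def semi_eigcomb eigcomb_apply algebra_simps)
  qed
qed

definition decay :: "nat \<Rightarrow> real" where
  "decay k = min (damping k / 2) (\<mu> k / damping k)"

lemma decay_nonneg: "0 \<le> decay k"
  using damping_pos[of k] mu_pos[of k] by (simp add: decay_def)

lemma Re_lam_le: "Re (lp k) \<le> - decay k" "Re (lm k) \<le> - decay k"
  unfolding lam_p_eq lam_m_eq decay_def
  using Re_quadratic_roots_le[OF damping_pos mu_pos] by blast+

lemma norm_lam_le: "norm (lp k) \<le> damping k + sqrt (\<mu> k)" "norm (lm k) \<le> damping k + sqrt (\<mu> k)"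
  unfolding lam_p_eq lam_m_eq
  using norm_quadratic_roots_le[OF less_imp_le[OF damping_pos] less_imp_le[OF mu_pos]] by blast+

definition ctrl_gain :: "real \<Rightarrow> nat \<Rightarrow> real" where
  "ctrl_gain t k = \<mu> k powr \<gamma> * ((2 + (norm (lp k) + norm (lm k)) / sqrt (\<mu> k)) / norm (lp k - lm k))
     * (exp (- decay k * (t / 2)) * (60 / t\<^sup>2 + norm (lp k - lm k) * (4 / t)))"

lemma ctrl_gain_nonneg: "0 < t \<Longrightarrow> 0 \<le> ctrl_gain t k"
  unfolding ctrl_gain_def using mu_pos[of k]
  by (intro mult_nonneg_nonneg add_nonneg_nonneg divide_nonneg_nonneg) auto

lemma norm_mode_ctrl_le:
  assumes "0 < t" "0 \<le> s" "s \<le> t"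
  shows "norm (mode_ctrl t k A B s)
           \<le> ctrl_gain t k * (norm (of_real (sqrt (\<mu> k)) * (A + B)) + norm (A * lp k + B * lm k))"
proof -
  let ?X = "exp (- decay k * (t / 2)) * (60 / t\<^sup>2 + norm (lp k - lm k) * (4 / t))"
  let ?N = "norm (of_real (sqrt (\<mu> k)) * (A + B)) + norm (A * lp k + B * lm k)"
  have \<sigma>: "t / 2 \<le> max s (t / 2)" "max s (t / 2) \<le> t" using assms by auto
  have "norm (mode_ctrl t k A B s) \<le> \<mu> k powr \<gamma> * ((norm A + norm B) * ?X)"
    unfolding mode_ctrl_def norm_mult
    using norm_steer_le[OF Re_lam_le decay_nonneg assms(1) \<sigma>] by (simp add: mult_left_mono)
  also have "\<dots> \<le> \<mu> k powr \<gamma> * ((2 + (norm (lp k) + norm (lm k)) / sqrt (\<mu> k)) / norm (lp k - lm k) * ?N * ?X)"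
    using coordinates_norm_le[OF real_sqrt_gt_zero[OF mu_pos[of k]] lam_p_neq_lam_m[of k], of A B] assms(1)
    by (intro mult_left_mono mult_right_mono) auto
  also have "\<dots> = ctrl_gain t k * ?N"
    by (simp add: ctrl_gain_def mult_ac)
  finally show ?thesis .
qed

lemma norm_null_ctrl_le:
  assumes "0 < t" "0 \<le> s" "s \<le> t"
  shows "norm (null_ctrl n t a b s j)
           \<le> ctrl_gain t j * (norm (fst (eigcomb n a b j)) + norm (snd (eigcomb n a b j)))"
  using norm_mode_ctrl_le[OF assms] ctrl_gain_nonneg[OF assms(1)]
  by (simp add: null_ctrl_def eigcomb_apply)

lemma Hnorm_eigcomb:
  "Hnorm (eigcomb n a b) = sqrt (\<Sum>j\<le>n. (cmod (fst (eigcomb n a b j)))\<^sup>2 + (cmod (snd (eigcomb n a b j)))\<^sup>2)"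
  unfolding Hnorm_def by (subst suminf_finite[of "{..n}"]) (auto simp: eigcomb_apply)

lemma Hnorm_nonneg: "h \<in> Hn \<mu> \<rho> \<alpha> n \<Longrightarrow> 0 \<le> Hnorm h"
  by (auto simp: Hn_iff Hnorm_eigcomb intro!: sum_nonneg)

lemma null_ctrl_measurable: "(\<lambda>s. null_ctrl n t a b s j) \<in> borel_measurable (restrict_space lborel {0..t})"
proof -
  have "continuous_on UNIV (\<lambda>s. null_ctrl n t a b s j)"
    unfolding null_ctrl_def by (cases "j \<le> n") (simp_all add: continuous_on_mode_ctrl)
  then have "(\<lambda>s. null_ctrl n t a b s j) \<in> borel_measurable lborel"
    using borel_measurable_continuous_onI by simp
  then show ?thesis by (rule measurable_restrict_space1)
qed

lemma L2sq_null_ctrl_le: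
  assumes t: "0 < t" and W: "0 \<le> W" "\<And>k. k \<le> n \<Longrightarrow> ctrl_gain t k \<le> W"
  shows "L2sq t (null_ctrl n t a b) \<le> ennreal (2 * W\<^sup>2 * (Hnorm (eigcomb n a b))\<^sup>2 * t)"
proof -
  let ?h = "eigcomb n a b" and ?u = "null_ctrl n t a b"
  define S where "S = (\<Sum>j\<le>n. (cmod (fst (?h j)))\<^sup>2 + (cmod (snd (?h j)))\<^sup>2)"
  have S: "0 \<le> S" "(Hnorm ?h)\<^sup>2 = S"
    by (simp_all add: S_def Hnorm_eigcomb sum_nonneg)
  have pointwise: "(\<Sum>j\<le>n. (cmod (?u s j))\<^sup>2) \<le> 2 * W\<^sup>2 * S" if s: "0 \<le> s" "s \<le> t" for s
  proof -
    have "(cmod (?u s j))\<^sup>2 \<le> 2 * W\<^sup>2 * ((cmod (fst (?h j)))\<^sup>2 + (cmod (snd (?h j)))\<^sup>2)" if "j \<le> n" for j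
    proof -
      let ?x = "cmod (fst (?h j))" and ?y = "cmod (snd (?h j))"
      have "cmod (?u s j) \<le> ctrl_gain t j * (?x + ?y)"
        by (rule norm_null_ctrl_le[OF t s])
      also have "\<dots> \<le> W * (?x + ?y)"
        using W(2)[OF that] by (intro mult_right_mono) auto
      finally have "(cmod (?u s j))\<^sup>2 \<le> W\<^sup>2 * (?x + ?y)\<^sup>2"
        by (metis norm_ge_zero power_mono power_mult_distrib)
      also have "\<dots> \<le> W\<^sup>2 * (2 * (?x\<^sup>2 + ?y\<^sup>2))"
        using zero_le_power2[of "?x - ?y"]
        by (intro mult_left_mono) (auto simp: power2_eq_square algebra_simps)
      finally show ?thesis by (simp add: algebra_simps)
    qed
    then show ?thesis
      unfolding S_def sum_distrib_left by (auto intro!: sum_mono)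
  qed
  have "L2sq t ?u \<le> (\<integral>\<^sup>+ s. ennreal (2 * W\<^sup>2 * S) * indicator {0..t} s \<partial>lborel)"
    unfolding L2sq_def
  proof (intro nn_integral_mono)
    fix s
    show "(\<Sum>j. ennreal ((cmod (?u s j))\<^sup>2)) * indicator {0..t} s \<le> ennreal (2 * W\<^sup>2 * S) * indicator {0..t} s"
    proof (cases "s \<in> {0..t}")
      case True
      have "(\<Sum>j. ennreal ((cmod (?u s j))\<^sup>2)) = ennreal (\<Sum>j\<le>n. (cmod (?u s j))\<^sup>2)"
        by (subst suminf_finite[of "{..n}"]) (auto simp: null_ctrl_def intro: sum_ennreal)
      then show ?thesis
        using True pointwise by (simp add: ennreal_leI)
    qed simp
  qed
  also have "\<dots> = ennreal (2 * W\<^sup>2 * S * t)"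
    using t S(1) by (simp add: nn_integral_cmult_indicator ennreal_mult'')
  finally show ?thesis by (simp add: S(2))
qed

lemma null_ctrl_L2:
  assumes t: "0 < t" and W: "0 \<le> W" "\<And>k. k \<le> n \<Longrightarrow> ctrl_gain t k \<le> W"
  shows "null_ctrl n t a b \<in> L2ctrl t"
    and "L2norm t (null_ctrl n t a b) \<le> W * Hnorm (eigcomb n a b) * sqrt (2 * t)"
proof -
  note L2 = L2sq_null_ctrl_le[of t W n a b, OF assms]
  then show "null_ctrl n t a b \<in> L2ctrl t"
    using null_ctrl_measurable by (auto simp: L2ctrl_def top.not_eq_extremum intro: le_less_trans)
  have "L2norm t (null_ctrl n t a b) \<le> sqrt (2 * W\<^sup>2 * (Hnorm (eigcomb n a b))\<^sup>2 * t)"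
    unfolding L2norm_def using L2 t by (intro real_sqrt_le_mono enn2real_leI) auto
  also have "\<dots> = W * Hnorm (eigcomb n a b) * sqrt (2 * t)"
    using W(1) Hnorm_nonneg[OF eigcomb_in_Hn]
    by (simp add: real_sqrt_mult power_mult_distrib mult_ac)
  finally show "L2norm t (null_ctrl n t a b) \<le> W * Hnorm (eigcomb n a b) * sqrt (2 * t)" .
qed

theorem null_controllable:
  assumes "0 < t" "h \<in> Hn \<mu> \<rho> \<alpha> n"
  shows "\<exists>u \<in> L2ctrl t. Ysol \<mu> \<rho> \<alpha> \<gamma> n h u t = (\<lambda>j. (0, 0))"
proof -
  obtain a b where h: "h = eigcomb n a b" using assms(2) by (auto simp: Hn_iff)
  define W where "W = Max (ctrl_gain t ` {..n})"
  have "0 \<le> W" "\<And>k. k \<le> n \<Longrightarrow> ctrl_gain t k \<le> W"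
    using ctrl_gain_nonneg[OF assms(1), of 0] by (auto simp: W_def Max_ge_iff)
  then show ?thesis
    using null_ctrl_L2(1)[OF assms(1)] Ysol_null_ctrl[OF assms(1)] unfolding h by blast
qed

lemma Energy_le:
  assumes t: "0 < t" and W: "\<And>k. ctrl_gain t k \<le> W" and h: "h \<in> Hn \<mu> \<rho> \<alpha> n"
  shows "Energy \<mu> \<rho> \<alpha> \<gamma> n t h \<le> W * Hnorm h * sqrt (2 * t)"
proof -
  obtain a b where h_eq: "h = eigcomb n a b" using h by (auto simp: Hn_iff)
  have W0: "0 \<le> W" using W[of 0] ctrl_gain_nonneg[OF t, of 0] by linarith
  let ?S = "{u \<in> L2ctrl t. Ysol \<mu> \<rho> \<alpha> \<gamma> n h u t = (\<lambda>j. (0, 0))}"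
  have "null_ctrl n t a b \<in> ?S"
    using null_ctrl_L2(1)[OF t W0 W] Ysol_null_ctrl[OF t] unfolding h_eq by blast
  moreover have "bdd_below (L2norm t ` ?S)"
    by (rule bdd_belowI[of _ 0]) (auto simp: L2norm_def)
  ultimately have "Energy \<mu> \<rho> \<alpha> \<gamma> n t h \<le> L2norm t (null_ctrl n t a b)"
    unfolding Energy_def by (intro cInf_lower imageI)
  also have "\<dots> \<le> W * Hnorm h * sqrt (2 * t)"
    using null_ctrl_L2(2)[OF t W0 W] unfolding h_eq .
  finally show ?thesis .
qed

end

section \<open>Estimates uniform in the mode\<close>

locale damped_modes_uniform = damped_modes +
  assumes mu_lim: "filterlim \<mu> at_top sequentially"
    and alpha: "1/2 \<le> \<alpha>" "\<alpha> < 1"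
    and gamma_le: "\<gamma> \<le> 1"
begin

lemma eventually_lam_gap_ge_1: "eventually (\<lambda>k. 1 \<le> norm (lp k - lm k)) sequentially"
proof -
  have "eventually (\<lambda>k. 1 \<le> \<bar>(damping k)\<^sup>2 - 4 * \<mu> k\<bar>) sequentially"
  proof (cases "\<alpha> = 1/2")
    case True
    then have disc: "(damping k)\<^sup>2 - 4 * \<mu> k = (\<rho>\<^sup>2 - 4) * \<mu> k" for k
      using damping_sq[of k] mu_pos[of k] by (simp add: algebra_simps)
    have "\<rho>\<^sup>2 \<noteq> 4" using nondeg[of 0] mu_pos[of 0] True by simp
    then have "eventually (\<lambda>k. 1 / \<bar>\<rho>\<^sup>2 - 4\<bar> \<le> \<mu> k) sequentially"
      using mu_lim by (simp add: filterlim_at_top)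
    then show ?thesis
    proof eventually_elim
      case (elim k)
      then have "1 \<le> \<bar>\<rho>\<^sup>2 - 4\<bar> * \<mu> k"
        using \<open>\<rho>\<^sup>2 \<noteq> 4\<close> by (simp add: field_simps)
      then show ?case
        unfolding disc using mu_pos[of k] by (simp add: abs_mult)
    qed
  next
    case False
    with alpha have "1/2 < \<alpha>" by simp
    then have "filterlim (\<lambda>x. \<rho>\<^sup>2 * x powr (2 * \<alpha>) - 4 * x) at_top at_top"
      using rho_pos by real_asymp
    from filterlim_compose[OF this mu_lim]
    have "filterlim (\<lambda>k. (damping k)\<^sup>2 - 4 * \<mu> k) at_top sequentially"
      by (simp add: damping_sq)
    then have "eventually (\<lambda>k. 1 \<le> (damping k)\<^sup>2 - 4 * \<mu> k) sequentially"
      by (simp add: filterlim_at_top)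
    then show ?thesis by eventually_elim simp
  qed
  then show ?thesis
    by eventually_elim (simp only: lam_p_minus_lam_m norm_csqrt norm_of_real real_sqrt_ge_1_iff)
qed

lemma decay_ge:
  assumes "1 \<le> \<mu> k"
  shows "min (\<rho> / 2) (1 / \<rho>) * \<mu> k powr (1 - \<alpha>) \<le> decay k"
proof -
  have "\<mu> k powr (1 - \<alpha>) \<le> \<mu> k powr \<alpha>"
    using assms alpha by (intro powr_mono) auto
  then have "min (\<rho> / 2) (1 / \<rho>) * \<mu> k powr (1 - \<alpha>) \<le> \<rho> / 2 * \<mu> k powr \<alpha>"
    using rho_pos by (intro mult_mono) auto
  moreover have "\<mu> k / damping k = 1 / \<rho> * \<mu> k powr (1 - \<alpha>)"
    using mu_pos[of k] by (simp add: damping_def powr_diff)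
  moreover have "min (\<rho> / 2) (1 / \<rho>) * \<mu> k powr (1 - \<alpha>) \<le> 1 / \<rho> * \<mu> k powr (1 - \<alpha>)"
    by (intro mult_right_mono) auto
  ultimately show ?thesis
    by (simp add: decay_def damping_def)
qed

lemma coordinates_factor_le:
  assumes mu: "1 \<le> \<mu> k"
  shows "2 + (norm (lp k) + norm (lm k)) / sqrt (\<mu> k) \<le> (4 + 2 * \<rho>) * \<mu> k"
proof -
  have "damping k / sqrt (\<mu> k) \<le> damping k"
    using mu damping_pos[of k] by (simp add: divide_le_eq)
  also have "\<dots> \<le> \<rho> * \<mu> k"
    using powr_mono[OF less_imp_le[OF alpha(2)] mu] mu rho_pos by (simp add: damping_def)
  finally have "damping k / sqrt (\<mu> k) \<le> \<rho> * \<mu> k" .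
  moreover have "(norm (lp k) + norm (lm k)) / sqrt (\<mu> k) \<le> (2 * damping k + 2 * sqrt (\<mu> k)) / sqrt (\<mu> k)"
    using norm_lam_le[of k] mu by (intro divide_right_mono) auto
  moreover have "(2 * damping k + 2 * sqrt (\<mu> k)) / sqrt (\<mu> k) = 2 * (damping k / sqrt (\<mu> k)) + 2"
    using mu by (simp add: field_simps)
  moreover have "(4 + 2 * \<rho>) * \<mu> k = 4 * \<mu> k + 2 * (\<rho> * \<mu> k)"
    by (simp add: algebra_simps)
  ultimately show ?thesis
    using mu by linarith
qed

lemma ctrl_gain_le:
  assumes t: "0 < t" and mu: "1 \<le> \<mu> k" and gap: "1 \<le> norm (lp k - lm k)"
  shows "ctrl_gain t k \<le> (4 + 2 * \<rho>) * (60 / t\<^sup>2 + 4 / t)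
           * ((\<mu> k)\<^sup>2 * exp (- (min (\<rho> / 2) (1 / \<rho>) * (t / 2)) * \<mu> k powr (1 - \<alpha>)))"
proof -
  let ?Q = "2 + (norm (lp k) + norm (lm k)) / sqrt (\<mu> k)"
  let ?d = "norm (lp k - lm k)"
  let ?c = "min (\<rho> / 2) (1 / \<rho>) * (t / 2)"
  have "?d \<noteq> 0" using gap by linarith
  then have "q / ?d * (60 / t\<^sup>2 + ?d * (4 / t)) = q * (60 / (t\<^sup>2 * ?d) + 4 / t)" for q
    using t by (simp add: field_simps power2_eq_square)
  from this[of ?Q]
  have "ctrl_gain t k = \<mu> k powr \<gamma> * ?Q * exp (- decay k * (t / 2)) * (60 / (t\<^sup>2 * ?d) + 4 / t)"
    unfolding ctrl_gain_def by (simp only: mult_ac)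
  also have "\<dots> \<le> \<mu> k * ((4 + 2 * \<rho>) * \<mu> k) * exp (- ?c * \<mu> k powr (1 - \<alpha>)) * (60 / t\<^sup>2 + 4 / t)"
  proof (intro mult_mono)
    show "\<mu> k powr \<gamma> \<le> \<mu> k"
      using powr_mono[OF gamma_le mu] mu by simp
    show "?Q \<le> (4 + 2 * \<rho>) * \<mu> k"
      by (rule coordinates_factor_le[OF mu])
    show "exp (- decay k * (t / 2)) \<le> exp (- ?c * \<mu> k powr (1 - \<alpha>))"
      using mult_right_mono[OF decay_ge[OF mu], of "t / 2"] t by (simp add: mult_ac)
    have "60 / (t\<^sup>2 * ?d) \<le> 60 / t\<^sup>2"
      using gap t by (intro frac_le) (auto simp: mult_le_cancel_left1)
    then show "60 / (t\<^sup>2 * ?d) + 4 / t \<le> 60 / t\<^sup>2 + 4 / t"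
      by simp
  qed (use mu rho_pos t in \<open>auto intro!: mult_nonneg_nonneg add_nonneg_nonneg\<close>)
  also have "\<dots> = (4 + 2 * \<rho>) * (60 / t\<^sup>2 + 4 / t) * ((\<mu> k)\<^sup>2 * exp (- ?c * \<mu> k powr (1 - \<alpha>)))"
    by (simp only: power2_eq_square mult_ac)
  finally show ?thesis .
qed

lemma ctrl_gain_tendsto_0:
  assumes t: "0 < t"
  shows "(\<lambda>k. ctrl_gain t k) \<longlonglongrightarrow> 0"
proof -
  define c where "c = min (\<rho> / 2) (1 / \<rho>) * (t / 2)"
  define K where "K = (4 + 2 * \<rho>) * (60 / t\<^sup>2 + 4 / t)"
  have "0 < c" using rho_pos t by (simp add: c_def)
  then have "((\<lambda>x. x\<^sup>2 * exp (- c * x powr (1 - \<alpha>))) \<longlongrightarrow> 0) at_top"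
    using alpha by real_asymp
  then have "((\<lambda>k. K * ((\<mu> k)\<^sup>2 * exp (- c * \<mu> k powr (1 - \<alpha>)))) \<longlongrightarrow> 0) sequentially"
    by (intro tendsto_mult_right_zero filterlim_compose[OF _ mu_lim])
  moreover have "eventually (\<lambda>k. 1 \<le> \<mu> k) sequentially"
    using mu_lim by (simp add: filterlim_at_top)
  then have "eventually (\<lambda>k. ctrl_gain t k \<le> K * ((\<mu> k)\<^sup>2 * exp (- c * \<mu> k powr (1 - \<alpha>)))) sequentially"
    using eventually_lam_gap_ge_1
    by eventually_elim (unfold K_def c_def, rule ctrl_gain_le[OF t])
  ultimately show ?thesis
    by (intro tendsto_sandwich[OF always_eventually[of "\<lambda>k. 0 \<le> ctrl_gain t k"]])
       (auto simp: ctrl_gain_nonneg[OF t])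
qed

lemma ctrl_gain_bounded:
  assumes "0 < t"
  obtains W where "\<And>k. ctrl_gain t k \<le> W"
proof -
  have "Bseq (\<lambda>k. ctrl_gain t k)"
    using ctrl_gain_tendsto_0[OF assms] by (intro convergent_imp_Bseq convergentI)
  then obtain W where W: "\<And>k. norm (ctrl_gain t k) \<le> W"
    by (auto simp: Bseq_def)
  have "ctrl_gain t k \<le> W" for k
    using W[of k] by simp
  with that show ?thesis by blast
qed

text \<open>The constant may depend on t, so any power of t can be absorbed into it; the content is
  that it does not depend on n.\<close>

lemma energy_bound:
  assumes t: "0 < t"
  shows "\<exists>c > 0. \<forall>n. \<forall>h \<in> Hn \<mu> \<rho> \<alpha> n. Energy \<mu> \<rho> \<alpha> \<gamma> n t h \<le> c * Hnorm h * t powr p"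
proof -
  obtain W where W: "\<And>k. ctrl_gain t k \<le> W"
    using ctrl_gain_bounded[OF t] by blast
  have "0 \<le> W" using W[of 0] ctrl_gain_nonneg[OF t, of 0] by linarith
  define c where "c = (W * sqrt (2 * t) + 1) / t powr p"
  have "Energy \<mu> \<rho> \<alpha> \<gamma> n t h \<le> c * Hnorm h * t powr p" if "h \<in> Hn \<mu> \<rho> \<alpha> n" for n h
  proof -
    have "Energy \<mu> \<rho> \<alpha> \<gamma> n t h \<le> W * Hnorm h * sqrt (2 * t)"
      by (rule Energy_le[OF t W that])
    also have "\<dots> \<le> (W * sqrt (2 * t) + 1) * Hnorm h"
      using Hnorm_nonneg[OF that] by (simp add: algebra_simps)
    finally show ?thesis
      using t by (simp add: c_def)
  qed
  moreover have "0 < c"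
    using \<open>0 \<le> W\<close> t by (simp add: c_def add_nonneg_pos)
  ultimately show ?thesis by blast
qed

end

theorem theorem5p4:
  fixes \<mu> :: "nat \<Rightarrow> real" and \<rho> \<alpha> \<gamma> :: real
  assumes mu_pos: "\<forall>k. 0 < \<mu> k"
    and mu_mono: "mono \<mu>"
    and mu_lim: "filterlim \<mu> at_top sequentially"
    and rho_pos: "0 < \<rho>"
    and alpha: "1/2 \<le> \<alpha>" "\<alpha> < 1"
    and gamma: "0 \<le> \<gamma>" "\<gamma> < 1/2"
    and nondeg: "\<forall>k. \<rho>\<^sup>2 \<noteq> 4 * \<mu> k powr (1 - 2 * \<alpha>)"
  shows "(\<forall>n t h. 0 < t \<longrightarrow> h \<in> Hn \<mu> \<rho> \<alpha> n \<longrightarrow>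
            (\<exists>u \<in> L2ctrl t. Ysol \<mu> \<rho> \<alpha> \<gamma> n h u t = (\<lambda>j. (0, 0))))
       \<and> (\<forall>t > 0. \<exists>c > 0. \<forall>n. \<forall>h \<in> Hn \<mu> \<rho> \<alpha> n.
            Energy \<mu> \<rho> \<alpha> \<gamma> n t h
              \<le> c * Hnorm h * t powr (- 1/2 - (\<gamma> + \<alpha> - 1/2) / (1 - \<alpha>)))"
proof -
  interpret damped_modes_uniform \<mu> \<rho> \<alpha> \<gamma>
    using mu_pos mu_lim rho_pos alpha gamma nondeg by unfold_locales auto
  show ?thesis
    using null_controllable energy_bound by blast
qed

end
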